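(* Let $r\ge 3$ and $Y,Z\subseteq\{1,\dots,r-1\}$. (1) The Dynkin diagram of $C_{\Phi_{r,Z}}$ is of type $D'_r$ if $r-1\in Z$ and of type $D_r$ if $r-1\notin Z$. (2) The Dynkin diagram of $C_{\Psi_{r,Y}}$ is of type $C_r$ if $r-1\in Y$ and of type $A_r$ if $r-1\notin Y$.
   Context: In $\mathbb{Z}^r$ with standard basis $\alpha_1,\dots,\alpha_r$ let $\eta_{i,j}=\sum_{k=i}^j\alpha_k$ for $i\le j$ and $\eta_{i,j}=0$ for $i>j$. For $Z\subseteq\{1,\dots,r-1\}$, $\Phi_{r,Z}$ consists of $\eta_{i,j-1}$ ($1\le i<j\le r$), $\eta_{i,r-2}+\alpha_r$ ($1\le i<r$), $\eta_{i,r}+\eta_{j,r-2}$ ($1\le i<j<r$), $\eta_{j,r}+\eta_{j,r-2}$ ($j\in Z$). For $Y\subseteq\{1,\dots,r-1\}$, $\Psi_{r,Y}$ consists of $\eta_{i,j}$ ($1\le i\le j\le r$), $\eta_{i,r}+\eta_{j,r-1}$ ($1\le i<j<r$), $\eta_{j,r}+\eta_{j,r-1}$ ($j\in Y$). For finite $\Lambda\subseteq\mathbb{Z}^r$, $C_\Lambda=(c_{ij})$ has $c_{ii}=2$ and $c_{ij}=-\max\{k\ge0: k\alpha_i+\alpha_j\in\Lambda\}$ for $i\ne j$. Its Dynkin diagram has vertices $1,\dots,r$ with an arrow to $i$ labelled $-c_{ij}$ iff $c_{ij}\ne0$. Type $X_r$ ($X=A,C,D$) means equal to the corresponding finite-type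 Cartan matrix up to relabelling; type $D'_r$: $c_{ij}=c_{ji}=-1$ exactly for the pairs $\{k,k+1\}$ ($1\le k\le r-3$), $\{r-2,r-1\}$, $\{r-2,r\}$, $\{r-1,r\}$, and $c_{ij}=0$ otherwise. *)

theory Defs
  imports Main "HOL-Library.Function_Algebras"
begin

text \<open>Elements of Z^r are modelled as functions nat => int; the standard basis
  vector alpha_i (1 <= i <= r) is the indicator of i.\<close>

definition alpha :: "nat \<Rightarrow> nat \<Rightarrow> int" where
  "alpha i = (\<lambda>k. if k = i then 1 else 0)"

definition eta :: "nat \<Rightarrow> nat \<Rightarrow> nat \<Rightarrow> int" where
  "eta i j = (\<lambda>x. \<Sum>k\<in>{i..j}. alpha k x)"

definition Phi :: "nat \<Rightarrow> nat set \<Rightarrow> (nat \<Rightarrow> int) set" where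
  "Phi r Z =
     {eta i (j - 1) | i j. 1 \<le> i \<and> i < j \<and> j \<le> r}
   \<union> {eta i (r - 2) + alpha r | i. 1 \<le> i \<and> i < r}
   \<union> {eta i r + eta j (r - 2) | i j. 1 \<le> i \<and> i < j \<and> j < r}
   \<union> {eta j r + eta j (r - 2) | j. j \<in> Z}"

definition Psi :: "nat \<Rightarrow> nat set \<Rightarrow> (nat \<Rightarrow> int) set" where
  "Psi r Y =
     {eta i j | i j. 1 \<le> i \<and> i \<le> j \<and> j \<le> r}
   \<union> {eta i r + eta j (r - 1) | i j. 1 \<le> i \<and> i < j \<and> j < r}
   \<union> {eta j r + eta j (r - 1) | j. j \<in> Y}"

text \<open>Cartan matrix C_Lambda: c_ii = 2, c_ij = - max {k. k alpha_i + alpha_j in Lambda}.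
  (The maximum is taken as Sup on nat; for the sets considered here the set is
  finite and nonempty.)\<close>
definition cartan :: "(nat \<Rightarrow> int) set \<Rightarrow> nat \<Rightarrow> nat \<Rightarrow> int" where
  "cartan \<Lambda> i j =
     (if i = j then 2
      else - int (Sup {k::nat. (\<lambda>x. int k * alpha i x + alpha j x) \<in> \<Lambda>}))"

text \<open>Standard finite-type Cartan matrices (Bourbaki labelling, a_ij = <alpha_i^vee, alpha_j>).\<close>
definition cartan_A :: "nat \<Rightarrow> nat \<Rightarrow> nat \<Rightarrow> int" where
  "cartan_A r i j = (if i = j then 2 else if i + 1 = j \<or> j + 1 = i then -1 else 0)"

definition cartan_C :: "nat \<Rightarrow> nat \<Rightarrow> nat \<Rightarrow> int" where
  "cartan_C r i j = (if i = j then 2 else if i = r - 1 \<and> j = r then -2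
                     else if i + 1 = j \<or> j + 1 = i then -1 else 0)"

definition cartan_D :: "nat \<Rightarrow> nat \<Rightarrow> nat \<Rightarrow> int" where
  "cartan_D r i j = (if i = j then 2
     else if (i + 1 = j \<or> j + 1 = i) \<and> max i j \<le> r - 1 then -1
     else if {i, j} = {r - 2, r} then -1 else 0)"

definition cartan_D' :: "nat \<Rightarrow> nat \<Rightarrow> nat \<Rightarrow> int" where
  "cartan_D' r i j = (if i = j then 2
     else if (i + 1 = j \<or> j + 1 = i) \<and> max i j \<le> r - 2 then -1
     else if {i, j} = {r - 2, r - 1} \<or> {i, j} = {r - 2, r} \<or> {i, j} = {r - 1, r} then -1
     else 0)"

definition of_type :: "nat \<Rightarrow> (nat \<Rightarrow> nat \<Rightarrow> int) \<Rightarrow> (nat \<Rightarrow> nat \<Rightarrow> int) \<Rightarrow> bool" where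
  "of_type r C X \<longleftrightarrow> (\<exists>\<sigma>. bij_betw \<sigma> {1..r} {1..r} \<and>
      (\<forall>i\<in>{1..r}. \<forall>j\<in>{1..r}. C (\<sigma> i) (\<sigma> j) = X i j))"

definition of_type_D' :: "nat \<Rightarrow> (nat \<Rightarrow> nat \<Rightarrow> int) \<Rightarrow> bool" where
  "of_type_D' r C \<longleftrightarrow> (\<forall>i\<in>{1..r}. \<forall>j\<in>{1..r}. C i j = cartan_D' r i j)"

end

theory Submission imports Defs begin

text \<open>Every element of Phi_{r,Z} and Psi_{r,Y} is the indicator of an interval or a sum
  of two such indicators whose large coordinates sit near r, so comparing coordinates shows
  that only k \<le> 1 occurs, with k = 1 exactly for neighbouring or specially linked indices,
  except for 2 alpha_{r-1} + alpha_r, which lies in Psi_{r,Y} precisely when r - 1 \<in> Y. The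
  Cartan matrices can then be read off in the given labelling, no relabelling being needed.\<close>

lemma alpha_apply: "alpha i x = (if x = i then 1 else 0)"
  by (simp add: alpha_def)

lemma eta_apply: "eta i j x = (if i \<le> x \<and> x \<le> j then 1 else 0)"
  unfolding eta_def alpha_def by simp

definition alpha_string :: "nat \<Rightarrow> nat \<Rightarrow> nat \<Rightarrow> nat \<Rightarrow> int" where
  "alpha_string k i j = (\<lambda>x. int k * alpha i x + alpha j x)"

lemma alpha_string_apply:
  "alpha_string k i j x = int k * (if x = i then 1 else 0) + (if x = j then 1 else 0)"
  by (simp add: alpha_string_def alpha_apply)

lemma cartan_eq_string_length:
  assumes "i \<noteq> j" and "{k. alpha_string k i j \<in> \<Lambda>} = {..m}"
  shows "cartan \<Lambda> i j = - int m"
  using assms unfolding cartan_def alpha_string_def by simp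

lemma eta_eq_alpha_stringD:
  assumes eq: "eta a c = alpha_string k i j" and "i \<noteq> j"
  shows "k = 0 \<or> k = 1 \<and> (i + 1 = j \<or> j + 1 = i) \<and> a \<le> min i j \<and> max i j \<le> c"
proof (rule ccontr)
  assume "\<not> ?thesis"
  moreover have "eta a c x = alpha_string k i j x" for x
    using eq by simp
  note this[of i] this[of j] this[of "min i j + 1"]
  ultimately show False
    using \<open>i \<noteq> j\<close> unfolding eta_apply alpha_string_apply
    by (auto split: if_splits simp: min_def max_def; linarith)
qed

definition Phi_linked :: "nat \<Rightarrow> nat set \<Rightarrow> nat \<Rightarrow> nat \<Rightarrow> bool" where
  "Phi_linked r Z i j \<longleftrightarrow>
     (i + 1 = j \<or> j + 1 = i) \<and> max i j \<le> r - 1 \<or> i = r - 2 \<and> j = r \<or> i = r \<and> j = r - 2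
     \<or> (i = r - 1 \<and> j = r \<or> i = r \<and> j = r - 1) \<and> r - 1 \<in> Z"

lemma alpha_string_in_PhiD:
  assumes mem: "alpha_string k i j \<in> Phi r Z" and "i \<noteq> j" and "r \<ge> 3"
    and "Z \<subseteq> {1..r-1}"
  shows "k = 0 \<or> k = 1 \<and> Phi_linked r Z i j"
  using mem unfolding Phi_def
proof (elim UnE CollectE exE conjE)
  fix a b assume eq: "alpha_string k i j = eta a (b - 1)" and "b \<le> r"
  from eta_eq_alpha_stringD[OF eq[symmetric] \<open>i \<noteq> j\<close>]
  have "k = 0 \<or> k = 1 \<and> (i + 1 = j \<or> j + 1 = i) \<and> max i j \<le> r - 1"
    using \<open>b \<le> r\<close> by auto
  then show ?thesis
    unfolding Phi_linked_def by blast
next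
  fix a assume eq: "alpha_string k i j = eta a (r - 2) + alpha r" and "a < r"
  have "alpha_string k i j x = (if a \<le> x \<and> x \<le> r - 2 then 1 else 0) + (if x = r then 1 else 0)"
    for x using eq by (simp add: eta_apply alpha_apply)
  note this[of i] this[of j] this[of a] this[of "r - 2"] this[of r]
  then show ?thesis
    using \<open>i \<noteq> j\<close> \<open>r \<ge> 3\<close> \<open>a < r\<close>
    unfolding alpha_string_apply Phi_linked_def
    by (auto split: if_splits; linarith)
next
  fix a b assume eq: "alpha_string k i j = eta a r + eta b (r - 2)" and "a < b" "b < r"
  have "alpha_string k i j x = (if a \<le> x \<and> x \<le> r then 1 else 0)
      + (if b \<le> x \<and> x \<le> r - 2 then 1 else 0)" for x
    using eq by (simp add: eta_apply)
  note this[of i] this[of j] this[of a] this[of "r - 1"] this[of r]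
  then show ?thesis
    using \<open>i \<noteq> j\<close> \<open>r \<ge> 3\<close> \<open>a < b\<close> \<open>b < r\<close>
    unfolding alpha_string_apply Phi_linked_def
    by (auto split: if_splits; linarith)
next
  fix b assume eq: "alpha_string k i j = eta b r + eta b (r - 2)" and "b \<in> Z"
  have "alpha_string k i j x = (if b \<le> x \<and> x \<le> r then 1 else 0)
      + (if b \<le> x \<and> x \<le> r - 2 then 1 else 0)" for x
    using eq by (simp add: eta_apply)
  note this[of i] this[of j] this[of b] this[of "r - 1"] this[of r]
  moreover have "1 \<le> b" "b \<le> r - 1"
    using \<open>b \<in> Z\<close> \<open>Z \<subseteq> {1..r-1}\<close> by auto
  ultimately show ?thesis
    using \<open>i \<noteq> j\<close> \<open>r \<ge> 3\<close> \<open>b \<in> Z\<close>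
    unfolding alpha_string_apply Phi_linked_def
    by (auto split: if_splits; linarith)
qed

lemma eta_in_Phi: "1 \<le> a \<Longrightarrow> a < b \<Longrightarrow> b \<le> r \<Longrightarrow> eta a (b - 1) \<in> Phi r Z"
  unfolding Phi_def by blast

lemma eta_plus_alpha_in_Phi: "1 \<le> a \<Longrightarrow> a < r \<Longrightarrow> eta a (r - 2) + alpha r \<in> Phi r Z"
  unfolding Phi_def by blast

lemma eta_plus_eta_in_Phi: "b \<in> Z \<Longrightarrow> eta b r + eta b (r - 2) \<in> Phi r Z"
  unfolding Phi_def by blast

lemma alpha_string_0_in_Phi:
  assumes "i \<noteq> j" and "j \<in> {1..r}" and "r \<ge> 3"
  shows "alpha_string 0 i j \<in> Phi r Z"
proof (cases "j < r")
  case True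
  have "alpha_string 0 i j = eta j (j + 1 - 1)"
    by (rule ext) (simp add: alpha_string_apply eta_apply)
  with True \<open>j \<in> {1..r}\<close> show ?thesis
    using eta_in_Phi[of j "j + 1" r Z] by simp
next
  case False
  then have "alpha_string 0 i j = eta (r - 1) (r - 2) + alpha r"
    using assms by (intro ext) (auto simp: alpha_string_apply eta_apply alpha_apply)
  with \<open>r \<ge> 3\<close> show ?thesis
    using eta_plus_alpha_in_Phi[of "r - 1" r Z] by simp
qed

lemma alpha_string_1_in_Phi:
  assumes "Phi_linked r Z i j" and "i \<in> {1..r}" "j \<in> {1..r}" and "r \<ge> 3"
  shows "alpha_string 1 i j \<in> Phi r Z"
proof -
  consider "i + 1 = j \<or> j + 1 = i" "max i j \<le> r - 1" | "i = r - 2 \<and> j = r \<or> i = r \<and> j = r - 2"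
    | "i = r - 1 \<and> j = r \<or> i = r \<and> j = r - 1" "r - 1 \<in> Z"
    using \<open>Phi_linked r Z i j\<close> unfolding Phi_linked_def by blast
  then show ?thesis
  proof cases
    case 1
    then have "alpha_string 1 i j = eta (min i j) (max i j + 1 - 1)"
      by (intro ext) (auto simp: alpha_string_apply eta_apply)
    moreover have "eta (min i j) (max i j + 1 - 1) \<in> Phi r Z"
      using assms(2-4) 1 by (intro eta_in_Phi) auto
    ultimately show ?thesis
      by simp
  next
    case 2
    then have "alpha_string 1 i j = eta (r - 2) (r - 2) + alpha r"
      using \<open>r \<ge> 3\<close> by (intro ext) (auto simp: alpha_string_apply eta_apply alpha_apply)
    with \<open>r \<ge> 3\<close> show ?thesis
      using eta_plus_alpha_in_Phi[of "r - 2" r Z] by simp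
  next
    case 3
    then have "alpha_string 1 i j = eta (r - 1) r + eta (r - 1) (r - 2)"
      using \<open>r \<ge> 3\<close> by (intro ext) (auto simp: alpha_string_apply eta_apply)
    with \<open>r - 1 \<in> Z\<close> show ?thesis
      using eta_plus_eta_in_Phi[of "r - 1" Z r] by simp
  qed
qed

lemma cartan_Phi:
  assumes "i \<in> {1..r}" "j \<in> {1..r}" and "r \<ge> 3" and "Z \<subseteq> {1..r-1}"
  shows "cartan (Phi r Z) i j = (if i = j then 2 else if Phi_linked r Z i j then -1 else 0)"
proof (cases "i = j")
  case True
  then show ?thesis by (simp add: cartan_def)
next
  case False
  define m :: nat where "m = (if Phi_linked r Z i j then 1 else 0)"
  have "alpha_string k i j \<in> Phi r Z \<longleftrightarrow> k \<le> m" for k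
  proof
    assume "alpha_string k i j \<in> Phi r Z"
    from alpha_string_in_PhiD[OF this False assms(3,4)] show "k \<le> m"
      unfolding m_def by auto
  next
    assume "k \<le> m"
    then consider "k = 0" | "k = 1" "Phi_linked r Z i j"
      unfolding m_def by (auto simp: le_Suc_eq split: if_splits)
    then show "alpha_string k i j \<in> Phi r Z"
      by cases (use alpha_string_0_in_Phi[OF False assms(2,3)] alpha_string_1_in_Phi[OF _ assms(1-3)] in auto)
  qed
  then have "{k. alpha_string k i j \<in> Phi r Z} = {..m}"
    by auto
  with False show ?thesis
    by (simp add: cartan_eq_string_length m_def)
qed

definition Psi_string_length :: "nat \<Rightarrow> nat set \<Rightarrow> nat \<Rightarrow> nat \<Rightarrow> nat" where
  "Psi_string_length r Y i j =
     (if i = r - 1 \<and> j = r \<and> r - 1 \<in> Y then 2 else if i + 1 = j \<or> j + 1 = i then 1 else 0)"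

lemma alpha_string_in_PsiD:
  assumes mem: "alpha_string k i j \<in> Psi r Y" and "i \<noteq> j" and "r \<ge> 3"
    and "Y \<subseteq> {1..r-1}"
  shows "k \<le> Psi_string_length r Y i j"
  using mem unfolding Psi_def
proof (elim UnE CollectE exE conjE)
  fix a b assume eq: "alpha_string k i j = eta a b"
  from eta_eq_alpha_stringD[OF eq[symmetric] \<open>i \<noteq> j\<close>] show ?thesis
    unfolding Psi_string_length_def by auto
next
  fix a b assume eq: "alpha_string k i j = eta a r + eta b (r - 1)" and "a < b" "b < r"
  have "alpha_string k i j x = (if a \<le> x \<and> x \<le> r then 1 else 0)
      + (if b \<le> x \<and> x \<le> r - 1 then 1 else 0)" for x
    using eq by (simp add: eta_apply)
  note this[of i] this[of j] this[of a] this[of "r - 1"] this[of r]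
  then show ?thesis
    using \<open>i \<noteq> j\<close> \<open>r \<ge> 3\<close> \<open>a < b\<close> \<open>b < r\<close>
    unfolding alpha_string_apply Psi_string_length_def
    by (auto split: if_splits; linarith)
next
  fix b assume eq: "alpha_string k i j = eta b r + eta b (r - 1)" and "b \<in> Y"
  have "alpha_string k i j x = (if b \<le> x \<and> x \<le> r then 1 else 0)
      + (if b \<le> x \<and> x \<le> r - 1 then 1 else 0)" for x
    using eq by (simp add: eta_apply)
  note this[of i] this[of j] this[of b] this[of "r - 1"] this[of r]
  moreover have "1 \<le> b" "b \<le> r - 1"
    using \<open>b \<in> Y\<close> \<open>Y \<subseteq> {1..r-1}\<close> by auto
  ultimately show ?thesis
    using \<open>i \<noteq> j\<close> \<open>r \<ge> 3\<close> \<open>b \<in> Y\<close>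
    unfolding alpha_string_apply Psi_string_length_def
    by (auto split: if_splits; linarith)
qed

lemma eta_in_Psi: "1 \<le> a \<Longrightarrow> a \<le> b \<Longrightarrow> b \<le> r \<Longrightarrow> eta a b \<in> Psi r Y"
  unfolding Psi_def by blast

lemma eta_plus_eta_in_Psi: "b \<in> Y \<Longrightarrow> eta b r + eta b (r - 1) \<in> Psi r Y"
  unfolding Psi_def by blast

lemma alpha_string_in_Psi:
  assumes "k \<le> Psi_string_length r Y i j" and "i \<noteq> j" and "i \<in> {1..r}" "j \<in> {1..r}"
  shows "alpha_string k i j \<in> Psi r Y"
proof -
  consider "k = 0" | "k = 1" "i + 1 = j \<or> j + 1 = i" | "k = 2" "i = r - 1" "j = r" "r - 1 \<in> Y"
    using assms(1,3) unfolding Psi_string_length_def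
    by (auto simp: le_Suc_eq numeral_2_eq_2 split: if_splits)
  then show ?thesis
  proof cases
    case 1
    then have "alpha_string k i j = eta j j"
      using \<open>i \<noteq> j\<close> by (intro ext) (auto simp: alpha_string_apply eta_apply)
    with \<open>j \<in> {1..r}\<close> show ?thesis
      using eta_in_Psi[of j j r Y] by simp
  next
    case 2
    then have "alpha_string k i j = eta (min i j) (max i j)"
      by (intro ext) (auto simp: alpha_string_apply eta_apply)
    moreover have "eta (min i j) (max i j) \<in> Psi r Y"
      using assms(3,4) by (intro eta_in_Psi) auto
    ultimately show ?thesis
      by simp
  next
    case 3
    then have "alpha_string k i j = eta (r - 1) r + eta (r - 1) (r - 1)"
      using \<open>i \<noteq> j\<close> by (intro ext) (auto simp: alpha_string_apply eta_apply)
    with \<open>r - 1 \<in> Y\<close> show ?thesis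
      using eta_plus_eta_in_Psi[of "r - 1" Y r] by simp
  qed
qed

lemma cartan_Psi:
  assumes "i \<in> {1..r}" "j \<in> {1..r}" and "r \<ge> 3" and "Y \<subseteq> {1..r-1}"
  shows "cartan (Psi r Y) i j = (if i = j then 2 else - int (Psi_string_length r Y i j))"
proof (cases "i = j")
  case True
  then show ?thesis by (simp add: cartan_def)
next
  case False
  have "{k. alpha_string k i j \<in> Psi r Y} = {..Psi_string_length r Y i j}"
    using alpha_string_in_PsiD[OF _ False assms(3,4)] alpha_string_in_Psi[OF _ False assms(1,2)]
    by auto
  with False show ?thesis
    by (simp add: cartan_eq_string_length)
qed

lemma of_type_if_eq:
  assumes "\<And>i j. i \<in> {1..r} \<Longrightarrow> j \<in> {1..r} \<Longrightarrow> C i j = X i j"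
  shows "of_type r C X"
  unfolding of_type_def using assms by (intro exI[of _ id]) auto

lemma Phi_linked_iff_D'_adjacent:
  assumes "r \<ge> 3" "i \<noteq> j" "i \<in> {1..r}" "j \<in> {1..r}" "r - 1 \<in> Z"
  shows "Phi_linked r Z i j \<longleftrightarrow> (i + 1 = j \<or> j + 1 = i) \<and> max i j \<le> r - 2
     \<or> {i, j} = {r - 2, r - 1} \<or> {i, j} = {r - 2, r} \<or> {i, j} = {r - 1, r}"
  using assms unfolding Phi_linked_def doubleton_eq_iff max_def by auto

lemma Phi_linked_iff_D_adjacent:
  assumes "r \<ge> 3" "i \<noteq> j" "i \<in> {1..r}" "j \<in> {1..r}" "r - 1 \<notin> Z"
  shows "Phi_linked r Z i j \<longleftrightarrow> (i + 1 = j \<or> j + 1 = i) \<and> max i j \<le> r - 1 \<or> {i, j} = {r - 2, r}"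
  using assms unfolding Phi_linked_def doubleton_eq_iff max_def by auto

lemma cartan_Phi_eq_D':
  assumes "i \<in> {1..r}" "j \<in> {1..r}" and "r \<ge> 3" and "Z \<subseteq> {1..r-1}" and "r - 1 \<in> Z"
  shows "cartan (Phi r Z) i j = cartan_D' r i j"
  unfolding cartan_Phi[OF assms(1-4)]
  by (cases "i = j") (simp_all add: cartan_D'_def Phi_linked_iff_D'_adjacent[OF assms(3) _ assms(1,2,5)])

lemma cartan_Phi_eq_D:
  assumes "i \<in> {1..r}" "j \<in> {1..r}" and "r \<ge> 3" and "Z \<subseteq> {1..r-1}" and "r - 1 \<notin> Z"
  shows "cartan (Phi r Z) i j = cartan_D r i j"
  unfolding cartan_Phi[OF assms(1-4)]
  by (cases "i = j") (simp_all add: cartan_D_def Phi_linked_iff_D_adjacent[OF assms(3) _ assms(1,2,5)])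

lemma cartan_Psi_eq_C:
  assumes "i \<in> {1..r}" "j \<in> {1..r}" and "r \<ge> 3" and "Y \<subseteq> {1..r-1}" and "r - 1 \<in> Y"
  shows "cartan (Psi r Y) i j = cartan_C r i j"
  using \<open>r - 1 \<in> Y\<close>
  by (simp add: cartan_Psi[OF assms(1-4)] Psi_string_length_def cartan_C_def)

lemma cartan_Psi_eq_A:
  assumes "i \<in> {1..r}" "j \<in> {1..r}" and "r \<ge> 3" and "Y \<subseteq> {1..r-1}" and "r - 1 \<notin> Y"
  shows "cartan (Psi r Y) i j = cartan_A r i j"
  using \<open>r - 1 \<notin> Y\<close>
  by (simp add: cartan_Psi[OF assms(1-4)] Psi_string_length_def cartan_A_def)

theorem proposition3p11:
  fixes r :: nat and Y Z :: "nat set"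
  assumes "r \<ge> 3" and "Y \<subseteq> {1..r-1}" and "Z \<subseteq> {1..r-1}"
  shows "(r - 1 \<in> Z \<longrightarrow> of_type_D' r (cartan (Phi r Z)))
       \<and> (r - 1 \<notin> Z \<longrightarrow> of_type r (cartan (Phi r Z)) (cartan_D r))
       \<and> (r - 1 \<in> Y \<longrightarrow> of_type r (cartan (Psi r Y)) (cartan_C r))
       \<and> (r - 1 \<notin> Y \<longrightarrow> of_type r (cartan (Psi r Y)) (cartan_A r))"
proof (intro conjI impI)
  show "of_type_D' r (cartan (Phi r Z))" if "r - 1 \<in> Z"
    unfolding of_type_D'_def using cartan_Phi_eq_D'[OF _ _ assms(1,3) that] by blast
  show "of_type r (cartan (Phi r Z)) (cartan_D r)" if "r - 1 \<notin> Z"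
    using cartan_Phi_eq_D[OF _ _ assms(1,3) that] by (rule of_type_if_eq)
  show "of_type r (cartan (Psi r Y)) (cartan_C r)" if "r - 1 \<in> Y"
    using cartan_Psi_eq_C[OF _ _ assms(1,2) that] by (rule of_type_if_eq)
  show "of_type r (cartan (Psi r Y)) (cartan_A r)" if "r - 1 \<notin> Y"
    using cartan_Psi_eq_A[OF _ _ assms(1,2) that] by (rule of_type_if_eq)
qed

end
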